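(* Let $0<p<1$ and $1<\alpha<2$, and let $\mu,\nu$ be real numbers with $\alpha-2<\mu,\nu<0$ satisfying $$\mu+\nu=\alpha-2,\qquad p\sin(\pi\mu)=(1-p)\sin(\pi\nu).$$ Then for $t\in(0,1)$ and every $k=0,1,2,\ldots$, $$\mathcal{I}_{p,0,1}^{\mu,\nu,2-\alpha}\big[t^{\nu}(1-t)^{\mu}t^{k}\big]=\sum_{j=0}^{k}a_{k,j}t^{j},\qquad a_{k,j}=(-1)^{k}\frac{(-1)^{j}\Gamma(j+\alpha-1)\Gamma(\mu+1)}{\Gamma(\alpha-1-\nu-k+j)\Gamma(j+1)\Gamma(k+1-j)}.$$
   Context: For $\sigma>0$ and an interval $(a,b)$, the left and right Riemann–Liouville fractional integrals are ${}_{a}I_x^{\sigma}v(x)=\frac{1}{\Gamma(\sigma)}\int_a^x (x-y)^{\sigma-1}v(y)\,dy$ and ${}_{x}I_b^{\sigma}v(x)=\frac{1}{\Gamma(\sigma)}\int_x^b (y-x)^{\sigma-1}v(y)\,dy$. With $C_{\alpha,p}:=(\sin\pi\mu+\sin\pi\nu)/\sin\pi\alpha$, the two-sided fractional integral of order $\varrho>0$ on $(a,b)$ is $\mathcal{I}_{p,a,b}^{\mu,\nu,\varrho}v:=C_{\alpha,p}\big(p\,{}_{a}I_x^{\varrho}v+(1-p)\,{}_{x}I_b^{\varrho}v\big)$. *)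

theory Defs
  imports "HOL-Analysis.Analysis"
begin

definition RL_left :: "real \<Rightarrow> real \<Rightarrow> (real \<Rightarrow> real) \<Rightarrow> real \<Rightarrow> real" where
  "RL_left a \<sigma> v x =
     (1 / Gamma \<sigma>) * (\<integral>y\<in>{a<..<x}. (x - y) powr (\<sigma> - 1) * v y \<partial>lborel)"

definition RL_right :: "real \<Rightarrow> real \<Rightarrow> (real \<Rightarrow> real) \<Rightarrow> real \<Rightarrow> real" where
  "RL_right b \<sigma> v x =
     (1 / Gamma \<sigma>) * (\<integral>y\<in>{x<..<b}. (y - x) powr (\<sigma> - 1) * v y \<partial>lborel)"

definition C_const :: "real \<Rightarrow> real \<Rightarrow> real \<Rightarrow> real" where
  "C_const \<alpha> \<mu> \<nu> = (sin (pi * \<mu>) + sin (pi * \<nu>)) / sin (pi * \<alpha>)"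

definition two_sided_int ::
  "real \<Rightarrow> real \<Rightarrow> real \<Rightarrow> real \<Rightarrow> real \<Rightarrow> real \<Rightarrow> real \<Rightarrow> (real \<Rightarrow> real) \<Rightarrow> real \<Rightarrow> real" where
  "two_sided_int p a b \<alpha> \<mu> \<nu> \<rho> v x =
     C_const \<alpha> \<mu> \<nu> * (p * RL_left a \<rho> v x + (1 - p) * RL_right b \<rho> v x)"

end

theory Submission
  imports Defs
begin

text \<open>
  For \<open>0 < x < 1\<close>, multiply the \<open>k\<close>-th identity by \<open>x ^ k\<close> and sum over \<open>k\<close>. On the left the
  geometric series moves under the two one-sided integrals and replaces \<open>y ^ k\<close> by \<open>1 / (1 - x y)\<close>.
  The substitution \<open>y = t v / (v + 1 - t)\<close> on \<open>(0, t)\<close>, and its mirror image on \<open>(t, 1)\<close>, turn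
  both integrals into Stieltjes-type integrals over \<open>(0, \<infinity>)\<close>. Weighted by \<open>sin (\<pi> \<nu>)\<close> and
  \<open>sin (\<pi> \<mu>)\<close> these add up to \<open>- \<pi> e powr \<nu> (1 - e) powr \<mu>\<close> with \<open>e = (1 - t) / (1 - x t)\<close>,
  by Tonelli's theorem and \<open>\<integral>\<^sub>0\<^sup>\<infinity> v powr c / (v + b) dv = - \<pi> b powr c / sin (\<pi> c)\<close>.
  The condition \<open>p sin (\<pi> \<mu>) = (1 - p) sin (\<pi> \<nu>)\<close> makes \<open>C_const \<alpha> \<mu> \<nu> * p\<close> and
  \<open>C_const \<alpha> \<mu> \<nu> * (1 - p)\<close> exactly these weights divided by \<open>sin (\<pi> \<alpha>)\<close>, so by the
  reflection formula the left-hand sides have the generating function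
  \<open>\<Gamma> (\<alpha> - 1) (1 - x) powr \<mu> (1 - t x) powr (1 - \<alpha>)\<close>. The binomial series and a Cauchy product give
  the same generating function for the right-hand sides, and power series that agree on \<open>(0, 1)\<close>
  have equal coefficients.
\<close>

lemma Gamma_reflection_real:
  fixes z :: real
  shows "Gamma z * Gamma (1 - z) = pi / sin (pi * z)"
proof -
  have "complex_of_real (Gamma z * Gamma (1 - z)) = Gamma (of_real z) * Gamma (of_real (1 - z))"
    by (simp only: of_real_mult Gamma_complex_of_real)
  also have "\<dots> = Gamma (of_real z) * Gamma (1 - of_real z)"
    by simp
  also have "\<dots> = of_real pi / sin (of_real pi * of_real z)"
    by (rule Gamma_reflection_complex)
  also have "\<dots> = complex_of_real (pi / sin (pi * z))"
    by (simp only: of_real_mult[symmetric] sin_of_real of_real_divide)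
  finally show ?thesis
    by (simp only: of_real_eq_iff)
qed

lemma sin_pi_times_neg:
  fixes c :: real
  assumes "-1 < c" "c < 0"
  shows "sin (pi * c) < 0"
proof -
  have "pi * - c < pi * 1"
    using assms by (intro mult_strict_left_mono) auto
  then have "0 < sin (pi * - c)"
    using assms by (intro sin_gt_zero) (auto simp: mult_pos_neg)
  then show ?thesis
    by simp
qed

lemma Gamma_minus_one_reflection:
  fixes \<alpha> :: real
  assumes "1 < \<alpha>" "\<alpha> < 2"
  shows "Gamma (\<alpha> - 1) = - pi / (sin (pi * \<alpha>) * Gamma (2 - \<alpha>))"
proof -
  have reflection: "Gamma (\<alpha> - 1) * Gamma (2 - \<alpha>) = - pi / sin (pi * \<alpha>)"
    using Gamma_reflection_real[of "\<alpha> - 1"] by (simp add: right_diff_distrib sin_diff)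
  have "sin (pi * \<alpha>) \<noteq> 0"
    using sin_pi_times_neg[of "\<alpha> - 2"] assms by (simp add: right_diff_distrib sin_diff)
  then have "Gamma (2 - \<alpha>) \<noteq> 0"
    using reflection by auto
  then have "Gamma (\<alpha> - 1) = Gamma (\<alpha> - 1) * Gamma (2 - \<alpha>) / Gamma (2 - \<alpha>)"
    by simp
  also have "\<dots> = - pi / sin (pi * \<alpha>) / Gamma (2 - \<alpha>)"
    by (simp only: reflection)
  finally show ?thesis
    by simp
qed

lemma mult_less_one_if_less_one:
  fixes x y :: real
  assumes "x < 1" "0 \<le> y" "y \<le> 1"
  shows "x * y < 1"
proof (cases "x \<le> 0")
  case True
  then have "x * y \<le> 0"
    using assms by (simp add: mult_nonpos_nonneg)
  then show ?thesis
    by simp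
next
  case False
  then have "x * y \<le> x"
    using assms by (simp add: mult_left_le)
  then show ?thesis
    using assms by simp
qed

lemma has_integral_change_of_variables_nonneg:
  fixes f g g' :: "real \<Rightarrow> real"
  assumes "S \<in> sets lebesgue"
    and "\<And>x. x \<in> S \<Longrightarrow> (g has_field_derivative g' x) (at x within S)"
    and "inj_on g S"
    and "((\<lambda>x. \<bar>g' x\<bar> * f (g x)) has_integral I) S"
    and "\<And>x. x \<in> S \<Longrightarrow> 0 \<le> \<bar>g' x\<bar> * f (g x)"
  shows "(f has_integral I) (g ` S)"
proof -
  have "(\<lambda>x. \<bar>g' x\<bar> * f (g x)) absolutely_integrable_on S \<and>
      integral S (\<lambda>x. \<bar>g' x\<bar> * f (g x)) = I"
    using assms(4,5) nonnegative_absolutely_integrable_1 by blast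
  then have "f absolutely_integrable_on (g ` S) \<and> integral (g ` S) f = I"
    using has_absolute_integral_change_of_variables_1'[of S g g' f I] assms(1-3) by auto
  then show ?thesis
    using set_lebesgue_integral_eq_integral(1) has_integral_integrable_integral by metis
qed

lemma set_lborel_integral_eq_integral_nonneg:
  fixes f :: "real \<Rightarrow> real"
  assumes "f \<in> borel_measurable borel" "S \<in> sets borel"
    and "f integrable_on S" "\<And>x. x \<in> S \<Longrightarrow> 0 \<le> f x"
  shows "(LINT x:S|lborel. f x) = integral S f"
proof -
  have "(LINT x:S|lborel. f x) = (LINT x:S|lebesgue. f x)"
    using assms(1,2) unfolding set_lebesgue_integral_def by (simp add: integral_completion)
  also have "\<dots> = integral S f"
    using assms(3,4) by (intro set_lebesgue_integral_eq_integral(2) nonnegative_absolutely_integrable_1)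
  finally show ?thesis .
qed

lemma has_integral_iterated_eq:
  fixes f :: "real \<Rightarrow> real \<Rightarrow> real"
  assumes S: "S \<in> sets borel" and f: "(\<lambda>(x, y). f x y) \<in> borel_measurable (lborel \<Otimes>\<^sub>M lborel)"
    and nonneg: "\<And>x y. x \<in> S \<Longrightarrow> y \<in> S \<Longrightarrow> 0 \<le> f x y"
    and g: "\<And>x. x \<in> S \<Longrightarrow> ((\<lambda>y. f x y) has_integral g x) S" and G: "(g has_integral G) S"
    and h: "\<And>y. y \<in> S \<Longrightarrow> ((\<lambda>x. f x y) has_integral h y) S" and H: "(h has_integral H) S"
  shows "G = H"
proof -
  define F where "F x y = ennreal (f x y) * indicator S x * indicator S y" for x y
  have g_nonneg: "0 \<le> g x" if "x \<in> S" for x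
    using g[OF that] by (rule has_integral_nonneg) (use nonneg that in auto)
  have h_nonneg: "0 \<le> h y" if "y \<in> S" for y
    using h[OF that] by (rule has_integral_nonneg) (use nonneg that in auto)
  have inner_y: "(\<integral>\<^sup>+ y. F x y \<partial>lborel) = ennreal (g x) * indicator S x" for x
    using nn_integral_has_integral_lebesgue'[OF _ g, of x] nonneg by (cases "x \<in> S") (auto simp: F_def)
  have inner_x: "(\<integral>\<^sup>+ x. F x y \<partial>lborel) = ennreal (h y) * indicator S y" for y
    using nn_integral_has_integral_lebesgue'[OF _ h, of y] nonneg by (cases "y \<in> S") (auto simp: F_def mult_ac)
  have "(\<lambda>(x, y). F x y) \<in> borel_measurable (lborel \<Otimes>\<^sub>M lborel)"
    using f S unfolding F_def by measurable
  then have "(\<integral>\<^sup>+ y. (\<integral>\<^sup>+ x. F x y \<partial>lborel) \<partial>lborel) = (\<integral>\<^sup>+ x. (\<integral>\<^sup>+ y. F x y \<partial>lborel) \<partial>lborel)"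
    by (rule lborel_pair.Fubini')
  then have "ennreal H = ennreal G"
    unfolding inner_x inner_y
    using nn_integral_has_integral_lebesgue'[OF _ G] nn_integral_has_integral_lebesgue'[OF _ H] g_nonneg h_nonneg
    by simp
  moreover have "0 \<le> G" "0 \<le> H"
    using G H g_nonneg h_nonneg by (auto intro: has_integral_nonneg)
  ultimately show ?thesis
    by simp
qed

section \<open>Stieltjes-type integrals over the half-line\<close>

text \<open>The substitution \<open>v = b x / (1 - x)\<close> reduces the integral to \<open>Beta (c + 1) (- c)\<close>.\<close>
lemma has_integral_powr_div_add:
  fixes b c :: real
  assumes c: "-1 < c" "c < 0" and b: "0 < b"
  shows "((\<lambda>v. v powr c / (v + b)) has_integral (- pi / sin (pi * c) * b powr c)) {0<..}"
proof -
  define g where "g x = b * x / (1 - x)" for x :: real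
  define g' where "g' x = b / (1 - x)^2" for x :: real
  have der: "(g has_field_derivative g' x) (at x within {0<..<1})" if "x \<in> {0<..<1}" for x
    using that unfolding g_def g'_def
    by (auto intro!: derivative_eq_intros simp: field_simps power2_eq_square)
  have inj: "inj_on g {0<..<1}"
    unfolding g_def inj_on_def using b by (auto simp: field_simps)
  have img: "g ` {0<..<1} = {0<..}"
  proof (intro equalityI subsetI)
    fix v :: real assume "v \<in> {0<..}"
    then have "v / (v + b) \<in> {0<..<1}" and "g (v / (v + b)) = v"
      using b by (auto simp: g_def divide_simps)
    then show "v \<in> g ` {0<..<1}"
      by (metis image_eqI)
  qed (use b in \<open>auto simp: g_def\<close>)
  have jacobian: "\<bar>g' x\<bar> * (g x powr c / (g x + b)) =
      b powr c * (x powr c * (1 - x) powr (- c - 1))" if "x \<in> {0<..<1}" for x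
  proof -
    have x: "0 < x" "x < 1"
      using that by auto
    have gx: "0 < g x" "g x + b = b / (1 - x)"
      using x b by (simp_all add: g_def field_simps)
    have "ln (\<bar>g' x\<bar> * (g x powr c / (g x + b))) =
        ln (b powr c * (x powr c * (1 - x) powr (- c - 1)))"
      using x b gx by (simp add: g_def g'_def ln_mult ln_div ln_powr ln_realpow) (simp add: algebra_simps)
    then show ?thesis
      using x b gx by (simp add: g'_def)
  qed
  have "Beta (c + 1) (- c) = - pi / sin (pi * c)"
    using Gamma_reflection_real[of "c + 1"] by (simp add: Beta_def distrib_left)
  then have "((\<lambda>x. b powr c * (x powr c * (1 - x) powr (- c - 1))) has_integral
      (- pi / sin (pi * c) * b powr c)) {0<..<1}"
    using has_integral_mult_right[OF has_integral_Beta_real[of "c + 1" "- c"], of "b powr c"] c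
    by (simp add: has_integral_Icc_iff_Ioo mult.commute)
  then have "((\<lambda>x. \<bar>g' x\<bar> * (g x powr c / (g x + b))) has_integral
      (- pi / sin (pi * c) * b powr c)) {0<..<1}"
    by (rule has_integral_eq[rotated]) (rule jacobian[symmetric])
  then have "((\<lambda>v. v powr c / (v + b)) has_integral (- pi / sin (pi * c) * b powr c)) (g ` {0<..<1})"
    using b by (intro has_integral_change_of_variables_nonneg[OF _ der inj])
      (auto simp: g_def intro!: divide_nonneg_pos add_pos_pos)
  then show ?thesis
    by (simp only: img)
qed

lemma has_integral_powr_div_mult_add:
  fixes a b c :: real
  assumes c: "-1 < c" "c < 0" and ab: "0 < a" "0 < b" "a \<noteq> b"
  shows "((\<lambda>x. x powr c / ((x + a) * (x + b))) has_integral
      (- pi / sin (pi * c) * (a powr c - b powr c) / (b - a))) {0<..}"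
proof -
  have pf: "(x powr c / (x + a) - x powr c / (x + b)) / (b - a) = x powr c / ((x + a) * (x + b))"
    if "x \<in> {0<..}" for x
  proof -
    have "x powr c / (x + a) - x powr c / (x + b) = x powr c * (b - a) / ((x + a) * (x + b))"
      using that ab by (simp add: divide_simps) (simp add: algebra_simps)
    then show ?thesis
      using ab by simp
  qed
  have "((\<lambda>x. (x powr c / (x + a) - x powr c / (x + b)) / (b - a)) has_integral
      (- pi / sin (pi * c) * a powr c - - pi / sin (pi * c) * b powr c) / (b - a)) {0<..}"
    by (intro has_integral_divide has_integral_diff has_integral_powr_div_add c ab)
  then have "((\<lambda>x. x powr c / ((x + a) * (x + b))) has_integral
      (- pi / sin (pi * c) * a powr c - - pi / sin (pi * c) * b powr c) / (b - a)) {0<..}"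
    by (rule has_integral_eq[rotated]) (rule pf)
  then show ?thesis
    by (simp only: right_diff_distrib)
qed

lemma integrable_powr_mult_powr_div_add:
  fixes a b e :: real
  assumes a: "-1 < a" "a < 0" and b: "b \<le> 0" and e: "0 < e"
  shows "(\<lambda>v. v powr a * (1 + v) powr b / (v + e)) integrable_on {0<..}"
proof (rule measurable_bounded_by_integrable_imp_integrable)
  show "(\<lambda>v. v powr a * (1 + v) powr b / (v + e)) \<in> borel_measurable (lebesgue_on {0<..})"
    by (intro measurable_restrict_space1 measurable_completion) measurable
  show "(\<lambda>v. v powr a / (v + e)) integrable_on {0<..}"
    using has_integral_powr_div_add[OF a e] by blast
  show "norm (v powr a * (1 + v) powr b / (v + e)) \<le> v powr a / (v + e)" if "v \<in> {0<..}" for v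
  proof -
    have "(1 + v) powr b \<le> (1 + v) powr 0"
      using that b by (intro powr_mono) auto
    then have "v powr a * (1 + v) powr b \<le> v powr a"
      using that by (intro mult_left_le) auto
    then have "v powr a * (1 + v) powr b / (v + e) \<le> v powr a / (v + e)"
      using that e by (intro divide_right_mono) auto
    then show ?thesis
      using that e by simp
  qed
qed simp

text \<open>Both sides come from the double integral of \<open>x powr \<nu> / (x + e) * (y powr \<mu> / (y + 1 + x))\<close>
  over \<open>{0<..}\<^sup>2\<close>, integrated in the two possible orders.\<close>
lemma stieltjes_pair_identity:
  fixes \<mu> \<nu> e :: real
  assumes \<mu>: "-1 < \<mu>" "\<mu> < 0" and \<nu>: "-1 < \<nu>" "\<nu> < 0" and e: "0 < e" "e < 1"
  shows "sin (pi * \<nu>) * integral {0<..} (\<lambda>v. v powr \<nu> * (1 + v) powr \<mu> / (v + e)) +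
      sin (pi * \<mu>) * integral {0<..} (\<lambda>v. v powr \<mu> * (1 + v) powr \<nu> / (v + (1 - e))) =
      - pi * e powr \<nu> * (1 - e) powr \<mu>"
proof -
  define S :: "real set" where "S = {0<..}"
  define K where "K c = - pi / sin (pi * c)" for c :: real
  define q where "q v = v powr \<nu> * (1 + v) powr \<mu> / (v + e)" for v :: real
  define p where "p v = v powr \<mu> * (1 + v) powr \<nu> / (v + (1 - e))" for v :: real
  define Q where "Q = integral S q"
  define P where "P = integral S p"
  have q: "(q has_integral Q) S" and p: "(p has_integral P) S"
    unfolding Q_def P_def S_def q_def p_def using \<mu> \<nu> e
    by (auto intro!: integrable_integral integrable_powr_mult_powr_div_add)
  have "K \<mu> * Q = K \<nu> * (e powr \<nu> * (K \<mu> * (1 - e) powr \<mu>) - P)"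
  proof (rule has_integral_iterated_eq[where f = "\<lambda>x y. x powr \<nu> / (x + e) * (y powr \<mu> / (y + (1 + x)))"])
    show "((\<lambda>y. x powr \<nu> / (x + e) * (y powr \<mu> / (y + (1 + x)))) has_integral K \<mu> * q x) S"
      if "x \<in> S" for x
      using has_integral_mult_right[OF has_integral_powr_div_add[OF \<mu>, of "1 + x"], of "x powr \<nu> / (x + e)"] that
      by (simp add: K_def q_def S_def mult_ac)
    show "((\<lambda>x. x powr \<nu> / (x + e) * (y powr \<mu> / (y + (1 + x)))) has_integral
        y powr \<mu> * (K \<nu> * (e powr \<nu> - (1 + y) powr \<nu>) / (1 + y - e))) S" if "y \<in> S" for y
      using has_integral_mult_right[OF has_integral_powr_div_mult_add[OF \<nu>, of e "1 + y"], of "y powr \<mu>"] that e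
      by (simp add: K_def S_def ac_simps)
    have "y powr \<mu> * (K \<nu> * (e powr \<nu> - (1 + y) powr \<nu>) / (1 + y - e)) =
        K \<nu> * (e powr \<nu> * (y powr \<mu> / (y + (1 - e))) - p y)" for y
      by (simp add: p_def diff_divide_distrib right_diff_distrib mult_ac add_diff_eq add.commute)
    moreover have "((\<lambda>y. K \<nu> * (e powr \<nu> * (y powr \<mu> / (y + (1 - e))) - p y)) has_integral
        K \<nu> * (e powr \<nu> * (K \<mu> * (1 - e) powr \<mu>) - P)) S"
      unfolding S_def using has_integral_powr_div_add[OF \<mu>, of "1 - e"] p e
      by (intro has_integral_mult_right has_integral_diff) (simp_all add: K_def S_def mult.commute)
    ultimately show "((\<lambda>y. y powr \<mu> * (K \<nu> * (e powr \<nu> - (1 + y) powr \<nu>) / (1 + y - e))) has_integral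
        K \<nu> * (e powr \<nu> * (K \<mu> * (1 - e) powr \<mu>) - P)) S"
      by simp
    show "((\<lambda>x. K \<mu> * q x) has_integral K \<mu> * Q) S"
      using q by (rule has_integral_mult_right)
    show "(\<lambda>(x, y). x powr \<nu> / (x + e) * (y powr \<mu> / (y + (1 + x)))) \<in> borel_measurable (lborel \<Otimes>\<^sub>M lborel)"
      by measurable
  qed (use e in \<open>auto simp: S_def\<close>)
  then have "pi * (sin (pi * \<nu>) * Q + sin (pi * \<mu>) * P) = pi * (- pi * e powr \<nu> * (1 - e) powr \<mu>)"
    using sin_pi_times_neg[OF \<mu>] sin_pi_times_neg[OF \<nu>] unfolding K_def by (simp add: field_simps)
  then show ?thesis
    unfolding Q_def P_def S_def q_def p_def by (simp only: mult_left_cancel[OF pi_neq_zero])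
qed

section \<open>Moebius substitutions\<close>

lemma moebius_left_jacobian:
  fixes t x v \<mu> \<nu> :: real
  assumes t: "0 < t" "t < 1" and x: "x * t < 1" and v: "0 < v"
  defines "y \<equiv> t * v / (v + (1 - t))"
  shows "t * (1 - t) / (v + (1 - t))^2 * ((t - y) powr (- 1 - \<mu> - \<nu>) * (y powr \<nu> * (1 - y) powr \<mu>) / (1 - x * y)) =
    t powr (- \<mu>) * (1 - t) powr (- \<nu>) / (1 - x * t) * (v powr \<nu> * (1 + v) powr \<mu> / (v + (1 - t) / (1 - x * t)))"
proof -
  define a where "a = 1 - t"
  define d where "d = 1 - x * t"
  define e where "e = a / d"
  define A where "A = v + a"
  have a: "0 < a" and d: "0 < d" and e: "0 < e" and A: "0 < A"
    using t x v by (simp_all add: a_def d_def e_def A_def)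
  have "d * (v + e) = d * v + a"
    using d by (simp add: e_def field_simps)
  moreover have "1 - x * y = (d * v + a) / A"
    using A by (simp add: y_def A_def a_def d_def field_simps)
  ultimately have "1 - x * y = d * (v + e) / A"
    by simp
  moreover have "t - y = t * a / A" "1 - y = a * (1 + v) / A"
    using A by (simp_all add: y_def A_def a_def field_simps)
  ultimately have "t * a / A^2 * ((t - y) powr (- 1 - \<mu> - \<nu>) * (y powr \<nu> * (1 - y) powr \<mu>) / (1 - x * y)) =
      t * a / A^2 * ((t * a / A) powr (- 1 - \<mu> - \<nu>) * ((t * v / A) powr \<nu> * (a * (1 + v) / A) powr \<mu>) /
        (d * (v + e) / A))"
    by (simp add: y_def A_def a_def)
  also have "\<dots> = t powr (- \<mu>) * a powr (- \<nu>) / d * (v powr \<nu> * (1 + v) powr \<mu> / (v + e))"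
  proof -
    have "ln (t * a / A^2 * ((t * a / A) powr (- 1 - \<mu> - \<nu>) * ((t * v / A) powr \<nu> * (a * (1 + v) / A) powr \<mu>) /
          (d * (v + e) / A))) =
        ln (t powr (- \<mu>) * a powr (- \<nu>) / d * (v powr \<nu> * (1 + v) powr \<mu> / (v + e)))"
      using t v a A d e by (simp add: ln_mult ln_div ln_powr ln_realpow) (simp add: algebra_simps)
    then show ?thesis
      using t v a A d e by simp
  qed
  finally show ?thesis
    by (simp add: A_def a_def d_def e_def)
qed

lemma has_integral_moebius_left:
  fixes t x \<mu> \<nu> Q :: real
  assumes t: "0 < t" "t < 1" and x: "x * t < 1"
    and Q: "((\<lambda>v. v powr \<nu> * (1 + v) powr \<mu> / (v + (1 - t) / (1 - x * t))) has_integral Q) {0<..}"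
  shows "((\<lambda>y. (t - y) powr (- 1 - \<mu> - \<nu>) * (y powr \<nu> * (1 - y) powr \<mu>) / (1 - x * y)) has_integral
      (t powr (- \<mu>) * (1 - t) powr (- \<nu>) / (1 - x * t) * Q)) {0<..<t}"
proof -
  define g where "g v = t * v / (v + (1 - t))" for v
  define g' where "g' v = t * (1 - t) / (v + (1 - t))^2" for v
  define f where "f y = (t - y) powr (- 1 - \<mu> - \<nu>) * (y powr \<nu> * (1 - y) powr \<mu>) / (1 - x * y)" for y
  have der: "(g has_field_derivative g' v) (at v within {0<..})" if "v \<in> {0<..}" for v
    using that t unfolding g_def g'_def
    by (auto intro!: derivative_eq_intros simp: field_simps power2_eq_square)
  have inj: "inj_on g {0<..}"
  proof (rule inj_onI)
    fix v w :: real
    assume "v \<in> {0<..}" "w \<in> {0<..}" "g v = g w"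
    then have "(v - w) * (t * (1 - t)) = 0"
      using t by (simp add: g_def field_simps)
    then show "v = w"
      using t by simp
  qed
  have img: "g ` {0<..} = {0<..<t}"
  proof (intro equalityI subsetI)
    fix y assume y: "y \<in> {0<..<t}"
    have "(1 - t) * y / (t - y) + (1 - t) = (1 - t) * t / (t - y)"
      using y by (simp add: field_simps)
    then have "(1 - t) * y / (t - y) \<in> {0<..}" and "g ((1 - t) * y / (t - y)) = y"
      using t y by (simp_all add: g_def)
    then show "y \<in> g ` {0<..}"
      by (metis image_eqI)
  qed (use t in \<open>auto simp: g_def field_simps\<close>)
  have jacobian: "\<bar>g' v\<bar> * f (g v) = t powr (- \<mu>) * (1 - t) powr (- \<nu>) / (1 - x * t) *
      (v powr \<nu> * (1 + v) powr \<mu> / (v + (1 - t) / (1 - x * t)))" if "v \<in> {0<..}" for v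
    using moebius_left_jacobian[OF t x, of v \<mu> \<nu>] that t by (simp add: g_def g'_def f_def)
  have "((\<lambda>v. \<bar>g' v\<bar> * f (g v)) has_integral (t powr (- \<mu>) * (1 - t) powr (- \<nu>) / (1 - x * t) * Q)) {0<..}"
    using has_integral_mult_right[OF Q] by (rule has_integral_eq[rotated]) (simp add: jacobian)
  then have "(f has_integral (t powr (- \<mu>) * (1 - t) powr (- \<nu>) / (1 - x * t) * Q)) (g ` {0<..})"
    using t x by (intro has_integral_change_of_variables_nonneg[OF _ der inj]) (auto simp: jacobian)
  then show ?thesis
    by (simp add: img f_def[abs_def])
qed

text \<open>Reflecting \<open>y\<close> to \<open>1 - y\<close> reduces this to the left-hand case, with \<open>x / (x - 1)\<close> in place
  of \<open>x\<close>.\<close>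
lemma has_integral_moebius_right:
  fixes t x \<mu> \<nu> P :: real
  assumes t: "0 < t" "t < 1" and x: "x < 1"
    and P: "((\<lambda>v. v powr \<mu> * (1 + v) powr \<nu> / (v + t * (1 - x) / (1 - x * t))) has_integral P) {0<..}"
  shows "((\<lambda>y. (y - t) powr (- 1 - \<mu> - \<nu>) * (y powr \<nu> * (1 - y) powr \<mu>) / (1 - x * y)) has_integral
      (t powr (- \<mu>) * (1 - t) powr (- \<nu>) / (1 - x * t) * P)) {t<..<1}"
proof -
  define f where "f y = (y - t) powr (- 1 - \<mu> - \<nu>) * (y powr \<nu> * (1 - y) powr \<mu>) / (1 - x * y)" for y
  define x' where "x' = x / (x - 1)"
  have reflect: "(1 - x' * z) * (1 - x) = 1 - x * (1 - z)" for z
    using x by (simp add: x'_def field_simps)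
  have xt: "x * t < 1"
    using t x by (intro mult_less_one_if_less_one) auto
  have D: "1 - x' * (1 - t) = (1 - x * t) / (1 - x)"
    using x by (simp add: x'_def field_simps)
  have "0 < 1 - x' * (1 - t)" and "t / (1 - x' * (1 - t)) = t * (1 - x) / (1 - x * t)"
    unfolding D using x xt by simp_all
  then have "((\<lambda>z. (1 - t - z) powr (- 1 - \<nu> - \<mu>) * (z powr \<mu> * (1 - z) powr \<nu>) / (1 - x' * z)) has_integral
      ((1 - t) powr (- \<nu>) * t powr (- \<mu>) / (1 - x' * (1 - t)) * P)) {0<..<1 - t}"
    using has_integral_moebius_left[where t = "1 - t" and x = x' and \<mu> = \<nu> and \<nu> = \<mu>] t P by simp
  then have "((\<lambda>z. \<bar>- 1\<bar> * f (1 - z)) has_integral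
      ((1 - t) powr (- \<nu>) * t powr (- \<mu>) / (1 - x' * (1 - t)) * P / (1 - x))) {0<..<1 - t}"
    by (rule has_integral_eq[rotated, OF has_integral_divide])
      (unfold f_def reflect[symmetric], simp add: divide_divide_eq_left diff_diff_eq add.commute)
  then have "(f has_integral ((1 - t) powr (- \<nu>) * t powr (- \<mu>) / (1 - x' * (1 - t)) * P / (1 - x)))
      ((\<lambda>z. 1 - z) ` {0<..<1 - t})"
    using x t by (intro has_integral_change_of_variables_nonneg[where g' = "\<lambda>_. - 1"])
      (auto intro!: derivative_eq_intros inj_onI divide_nonneg_pos mult_less_one_if_less_one simp: f_def)
  moreover have "(\<lambda>z. 1 - z) ` {0<..<1 - t} = {t<..<1}"
  proof (intro equalityI subsetI)
    fix y assume "y \<in> {t<..<1}"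
    then show "y \<in> (\<lambda>z. 1 - z) ` {0<..<1 - t}"
      by (intro image_eqI[of _ _ "1 - y"]) auto
  qed auto
  moreover have "(1 - t) powr (- \<nu>) * t powr (- \<mu>) / (1 - x' * (1 - t)) * P / (1 - x) =
      t powr (- \<mu>) * (1 - t) powr (- \<nu>) / (1 - x * t) * P"
    unfolding D using x xt by simp
  ultimately show ?thesis
    by (simp add: f_def[abs_def])
qed

lemma has_integral_two_sided_kernels:
  fixes t x \<mu> \<nu> :: real
  assumes t: "0 < t" "t < 1" and x: "x < 1" and \<mu>: "-1 < \<mu>" "\<mu> < 0" and \<nu>: "-1 < \<nu>" "\<nu> < 0"
  defines "e \<equiv> (1 - t) / (1 - x * t)"
  shows "((\<lambda>y. (t - y) powr (- 1 - \<mu> - \<nu>) * (y powr \<nu> * (1 - y) powr \<mu>) / (1 - x * y)) has_integral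
      t powr (- \<mu>) * (1 - t) powr (- \<nu>) / (1 - x * t) *
      integral {0<..} (\<lambda>v. v powr \<nu> * (1 + v) powr \<mu> / (v + e))) {0<..<t}"
    and "((\<lambda>y. (y - t) powr (- 1 - \<mu> - \<nu>) * (y powr \<nu> * (1 - y) powr \<mu>) / (1 - x * y)) has_integral
      t powr (- \<mu>) * (1 - t) powr (- \<nu>) / (1 - x * t) *
      integral {0<..} (\<lambda>v. v powr \<mu> * (1 + v) powr \<nu> / (v + (1 - e)))) {t<..<1}"
proof -
  have xt: "x * t < 1"
    using t x by (intro mult_less_one_if_less_one) auto
  have e: "0 < e" "1 - e = t * (1 - x) / (1 - x * t)"
    using t xt by (simp_all add: e_def field_simps)
  show "((\<lambda>y. (t - y) powr (- 1 - \<mu> - \<nu>) * (y powr \<nu> * (1 - y) powr \<mu>) / (1 - x * y)) has_integral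
      t powr (- \<mu>) * (1 - t) powr (- \<nu>) / (1 - x * t) *
      integral {0<..} (\<lambda>v. v powr \<nu> * (1 + v) powr \<mu> / (v + e))) {0<..<t}"
    using t xt \<mu> \<nu> e unfolding e_def
    by (intro has_integral_moebius_left integrable_integral integrable_powr_mult_powr_div_add) auto
  have "0 < 1 - e"
    using t x xt by (simp add: e)
  then show "((\<lambda>y. (y - t) powr (- 1 - \<mu> - \<nu>) * (y powr \<nu> * (1 - y) powr \<mu>) / (1 - x * y)) has_integral
      t powr (- \<mu>) * (1 - t) powr (- \<nu>) / (1 - x * t) *
      integral {0<..} (\<lambda>v. v powr \<mu> * (1 + v) powr \<nu> / (v + (1 - e)))) {t<..<1}"
    using t x \<mu> \<nu> unfolding e(2)
    by (intro has_integral_moebius_right integrable_integral integrable_powr_mult_powr_div_add) auto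
qed

lemma two_sided_kernel_identity:
  fixes t x \<mu> \<nu> :: real
  assumes t: "0 < t" "t < 1" and x: "x < 1" and \<mu>: "-1 < \<mu>" "\<mu> < 0" and \<nu>: "-1 < \<nu>" "\<nu> < 0"
  shows "sin (pi * \<nu>) * integral {0<..<t} (\<lambda>y. (t - y) powr (- 1 - \<mu> - \<nu>) * (y powr \<nu> * (1 - y) powr \<mu>) / (1 - x * y)) +
      sin (pi * \<mu>) * integral {t<..<1} (\<lambda>y. (y - t) powr (- 1 - \<mu> - \<nu>) * (y powr \<nu> * (1 - y) powr \<mu>) / (1 - x * y)) =
      - pi * (1 - x) powr \<mu> * (1 - x * t) powr (- 1 - \<mu> - \<nu>)"
proof -
  define e where "e = (1 - t) / (1 - x * t)"
  define T where "T = t powr (- \<mu>) * (1 - t) powr (- \<nu>) / (1 - x * t)"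
  have xt: "x * t < 1"
    using t x by (intro mult_less_one_if_less_one) auto
  have e: "0 < e" "e < 1" "1 - e = t * (1 - x) / (1 - x * t)"
    using t x xt by (simp_all add: e_def field_simps)
  have "sin (pi * \<nu>) * integral {0<..<t} (\<lambda>y. (t - y) powr (- 1 - \<mu> - \<nu>) * (y powr \<nu> * (1 - y) powr \<mu>) / (1 - x * y)) +
      sin (pi * \<mu>) * integral {t<..<1} (\<lambda>y. (y - t) powr (- 1 - \<mu> - \<nu>) * (y powr \<nu> * (1 - y) powr \<mu>) / (1 - x * y)) =
      T * (sin (pi * \<nu>) * integral {0<..} (\<lambda>v. v powr \<nu> * (1 + v) powr \<mu> / (v + e)) +
        sin (pi * \<mu>) * integral {0<..} (\<lambda>v. v powr \<mu> * (1 + v) powr \<nu> / (v + (1 - e))))"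
    using has_integral_two_sided_kernels[OF t x \<mu> \<nu>] unfolding T_def e_def
    by (simp add: integral_unique algebra_simps)
  also have "\<dots> = - pi * T * e powr \<nu> * (1 - e) powr \<mu>"
    using stieltjes_pair_identity[OF \<mu> \<nu> e(1,2)] by simp
  also have "\<dots> = - pi * (1 - x) powr \<mu> * (1 - x * t) powr (- 1 - \<mu> - \<nu>)"
  proof -
    have "ln (T * e powr \<nu> * (1 - e) powr \<mu>) = ln ((1 - x) powr \<mu> * (1 - x * t) powr (- 1 - \<mu> - \<nu>))"
      using t x xt unfolding T_def e(3) by (simp add: e_def ln_mult ln_div ln_powr) (simp add: algebra_simps)
    then have "T * e powr \<nu> * (1 - e) powr \<mu> = (1 - x) powr \<mu> * (1 - x * t) powr (- 1 - \<mu> - \<nu>)"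
      using t x xt e by (simp add: T_def)
    then show ?thesis
      by (simp only: mult.assoc)
  qed
  finally show ?thesis .
qed

section \<open>Power series\<close>

lemma integrable_on_mult_power:
  fixes w :: "real \<Rightarrow> real"
  assumes S: "S \<in> sets lebesgue" "S \<subseteq> {0..1}"
    and w: "w integrable_on S" "\<And>y. y \<in> S \<Longrightarrow> 0 \<le> w y"
  shows "(\<lambda>y. w y * y ^ k) integrable_on S"
proof (rule measurable_bounded_by_integrable_imp_integrable[OF _ w(1) _ S(1)])
  show "(\<lambda>y. w y * y ^ k) \<in> borel_measurable (lebesgue_on S)"
    by (rule borel_measurable_times[OF integrable_imp_measurable[OF w(1)]
        borel_measurable_power[OF id_borel_measurable_lebesgue_on[of S, unfolded id_def]]])
  show "norm (w y * y ^ k) \<le> w y" if "y \<in> S" for y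
    using w(2)[OF that] that S(2) by (auto simp: abs_mult mult_left_le power_le_one)
qed

lemma sums_integral_mult_power:
  fixes w :: "real \<Rightarrow> real" and x :: real
  assumes S: "S \<in> sets lebesgue" "S \<subseteq> {0..1}"
    and w: "w integrable_on S" "\<And>y. y \<in> S \<Longrightarrow> 0 \<le> w y"
    and x: "0 \<le> x" "x < 1"
  shows "(\<lambda>k. x ^ k * integral S (\<lambda>y. w y * y ^ k)) sums integral S (\<lambda>y. w y / (1 - x * y))"
proof -
  have y: "0 \<le> y" "y \<le> 1" if "y \<in> S" for y
    using that S by auto
  have xy: "0 \<le> x * y" "x * y < 1" if "y \<in> S" for y
    using y[OF that] x mult_less_one_if_less_one[of x y] by auto
  note power_integrable = integrable_on_mult_power[OF S w]
  define f where "f n y = (\<Sum>k<n. x ^ k * (w y * y ^ k))" for n y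
  have f: "f n y = w y * (\<Sum>k<n. (x * y) ^ k)" for n y
    by (simp add: f_def sum_distrib_left power_mult_distrib mult_ac)
  have term_integrable: "(\<lambda>y. x ^ k * (w y * y ^ k)) integrable_on S" for k
    using integrable_cmul[OF power_integrable, of "x ^ k"] by simp
  have f_integrable: "f n integrable_on S" for n
    unfolding f_def by (simp add: integrable_sum term_integrable)
  have bound_integrable: "(\<lambda>y. w y / (1 - x)) integrable_on S"
    using w(1) by (rule integrable_on_divide)
  have f_bound: "norm (f n y) \<le> w y / (1 - x)" if "y \<in> S" for n y
  proof -
    have "(\<Sum>k<n. (x * y) ^ k) \<le> 1 / (1 - x * y)"
      using xy[OF that] by (simp add: sum_gp_strict divide_right_mono)
    also have "\<dots> \<le> 1 / (1 - x)"
      using xy[OF that] x y[OF that] by (intro divide_left_mono) (auto simp: mult_left_le)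
    finally have "w y * (\<Sum>k<n. (x * y) ^ k) \<le> w y * (1 / (1 - x))"
      using w(2)[OF that] by (rule mult_left_mono)
    then show ?thesis
      using w(2)[OF that] xy[OF that] by (simp add: f abs_mult sum_nonneg)
  qed
  have f_limit: "(\<lambda>n. f n y) \<longlonglongrightarrow> w y / (1 - x * y)" if "y \<in> S" for y
  proof -
    have "(\<lambda>n. \<Sum>k<n. (x * y) ^ k) \<longlonglongrightarrow> 1 / (1 - x * y)"
      using geometric_sums[of "x * y"] xy[OF that] by (simp add: sums_def)
    then show ?thesis
      unfolding f by (auto intro: tendsto_eq_intros)
  qed
  have "(\<lambda>n. integral S (f n)) \<longlonglongrightarrow> integral S (\<lambda>y. w y / (1 - x * y))"
    by (rule dominated_convergence(2)[OF f_integrable bound_integrable f_bound f_limit])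
  moreover have "integral S (f n) = (\<Sum>k<n. x ^ k * integral S (\<lambda>y. w y * y ^ k))" for n
    unfolding f_def by (simp add: integral_sum term_integrable)
  ultimately show ?thesis
    by (simp add: sums_def)
qed

lemma powser_tendsto_at_right_0:
  fixes c :: "nat \<Rightarrow> real"
  assumes \<delta>: "0 < \<delta>" and sums: "\<And>x. 0 < x \<Longrightarrow> x < \<delta> \<Longrightarrow> (\<lambda>n. c n * x ^ n) sums f x"
  shows "(f \<longlongrightarrow> c 0) (at_right 0)"
proof -
  have "summable (\<lambda>n. c n * (\<delta> / 2) ^ n)"
    using sums[of "\<delta> / 2"] \<delta> by (auto simp: sums_iff)
  then have "isCont (\<lambda>x. \<Sum>n. c n * x ^ n) 0"
    by (rule isCont_powser) (use \<delta> in simp)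
  then have "((\<lambda>x. \<Sum>n. c n * x ^ n) \<longlongrightarrow> c 0) (at_right 0)"
    by (simp add: isCont_def filterlim_at_split)
  moreover have "eventually (\<lambda>x. (\<Sum>n. c n * x ^ n) = f x) (at_right 0)"
    using eventually_at_right_real[OF \<delta>] by eventually_elim (auto intro: sums_unique[OF sums, symmetric])
  ultimately show ?thesis
    by (rule Lim_transform_eventually)
qed

lemma powser_eq_imp_coeffs_eq:
  fixes a b :: "nat \<Rightarrow> real"
  assumes \<delta>: "0 < \<delta>"
    and a: "\<And>x. 0 < x \<Longrightarrow> x < \<delta> \<Longrightarrow> (\<lambda>n. a n * x ^ n) sums f x"
    and b: "\<And>x. 0 < x \<Longrightarrow> x < \<delta> \<Longrightarrow> (\<lambda>n. b n * x ^ n) sums f x"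
  shows "a = b"
proof (rule ccontr)
  define d where "d n = a n - b n" for n
  assume "a \<noteq> b"
  then have "\<exists>n. d n \<noteq> 0"
    by (auto simp: d_def fun_eq_iff)
  then obtain N where dN: "d N \<noteq> 0" and below_N: "\<And>n. n < N \<Longrightarrow> d n = 0"
    using exists_least_iff[of "\<lambda>n. d n \<noteq> 0"] by blast
  have "(\<lambda>n. d (n + N) * x ^ n) sums 0" if x: "0 < x" "x < \<delta>" for x
  proof -
    have "(\<lambda>n. d n * x ^ n) sums 0"
      using sums_diff[OF a[OF x] b[OF x]] by (simp add: d_def algebra_simps)
    moreover have "(\<Sum>n<N. d n * x ^ n) = 0"
      by (simp add: below_N)
    ultimately have "(\<lambda>n. d (n + N) * x ^ (n + N)) sums 0"
      using sums_split_initial_segment[of "\<lambda>n. d n * x ^ n" 0 N] by simp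
    then have "(\<lambda>n. d (n + N) * x ^ (n + N) / x ^ N) sums (0 / x ^ N)"
      by (rule sums_divide)
    then show ?thesis
      using x by (simp add: power_add)
  qed
  then have "((\<lambda>x::real. 0) \<longlongrightarrow> d N) (at_right 0)"
    using powser_tendsto_at_right_0[OF \<delta>, where c = "\<lambda>n. d (n + N)" and f = "\<lambda>x. 0"] by simp
  with dN show False
    by (simp add: tendsto_const_iff)
qed

lemma Gamma_mult_gbinomial_coeffs:
  fixes \<alpha> \<mu> :: real and m j :: nat
  assumes \<alpha>: "1 < \<alpha>" and \<mu>: "\<mu> \<notin> \<int>"
  shows "Gamma (\<alpha> - 1) * ((\<mu> gchoose m) * (-1) ^ m) * (((1 - \<alpha>) gchoose j) * (-1) ^ j) =
    (-1) ^ m * Gamma (real j + \<alpha> - 1) * Gamma (\<mu> + 1) / (Gamma (\<mu> - real m + 1) * fact j * fact m)"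
proof -
  have "\<alpha> - 1 \<notin> \<int>\<^sub>\<le>\<^sub>0"
    using \<alpha> by (auto elim!: nonpos_Ints_cases)
  then have Gamma_nonzero: "Gamma (\<alpha> - 1) \<noteq> 0"
    and "pochhammer (\<alpha> - 1) j = Gamma (real j + \<alpha> - 1) / Gamma (\<alpha> - 1)"
    using pochhammer_Gamma[of "\<alpha> - 1" j] by (simp_all add: Gamma_eq_zero_iff algebra_simps)
  then have neg_binomial: "((1 - \<alpha>) gchoose j) * (-1) ^ j = Gamma (real j + \<alpha> - 1) / Gamma (\<alpha> - 1) / fact j"
    by (simp add: gbinomial_pochhammer mult_ac)
  have "\<mu> - real m + 1 \<notin> \<int>"
  proof
    assume "\<mu> - real m + 1 \<in> \<int>"
    then have "(\<mu> - real m + 1) + (real m - 1) \<in> \<int>"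
      by (intro Ints_add Ints_diff) auto
    with \<mu> show False
      by simp
  qed
  then have "\<mu> - real m + 1 \<notin> \<int>\<^sub>\<le>\<^sub>0"
    using nonpos_Ints_subset_Ints by blast
  then have binomial: "\<mu> gchoose m = Gamma (\<mu> + 1) / Gamma (\<mu> - real m + 1) / fact m"
    using pochhammer_Gamma[of "\<mu> - real m + 1" m] by (simp add: gbinomial_pochhammer')
  show ?thesis
    unfolding neg_binomial binomial using Gamma_nonzero by (simp add: field_simps)
qed

definition two_sided_coeff :: "real \<Rightarrow> real \<Rightarrow> real \<Rightarrow> nat \<Rightarrow> nat \<Rightarrow> real" where
  "two_sided_coeff \<alpha> \<mu> \<nu> k j = (-1) ^ k * ((-1) ^ j * Gamma (real j + \<alpha> - 1) * Gamma (\<mu> + 1)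
      / (Gamma (\<alpha> - 1 - \<nu> - real k + real j) * Gamma (real j + 1) * Gamma (real k + 1 - real j)))"

lemma Gamma_mult_gbinomial_coeffs_eq_two_sided_coeff:
  fixes \<alpha> \<mu> \<nu> :: real and j k :: nat
  assumes \<alpha>: "1 < \<alpha>" and \<mu>: "\<mu> \<notin> \<int>" and \<mu>\<nu>: "\<mu> + \<nu> = \<alpha> - 2" and j: "j \<le> k"
  shows "Gamma (\<alpha> - 1) * ((\<mu> gchoose (k - j)) * (-1) ^ (k - j)) * (((1 - \<alpha>) gchoose j) * (-1) ^ j) =
    two_sided_coeff \<alpha> \<mu> \<nu> k j"
proof -
  have "(-1 :: real) ^ k = (-1) ^ (k - j) * (-1) ^ j"
    using j by (simp flip: power_add)
  then have "(-1 :: real) ^ (k - j) = (-1) ^ k * (-1) ^ j"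
    by (simp add: mult.assoc)
  moreover have "\<mu> - real (k - j) + 1 = \<alpha> - 1 - \<nu> - real k + real j"
    using \<mu>\<nu> j by (simp add: of_nat_diff)
  moreover have "(fact j :: real) = Gamma (real j + 1)"
    using Gamma_fact[of j, where 'a = real] by (simp add: add.commute)
  moreover have "(fact (k - j) :: real) = Gamma (real k + 1 - real j)"
    using Gamma_fact[of "k - j", where 'a = real] j by (simp add: of_nat_diff algebra_simps)
  ultimately show ?thesis
    unfolding Gamma_mult_gbinomial_coeffs[OF \<alpha> \<mu>] two_sided_coeff_def by (simp only: mult.assoc times_divide_eq_right)
qed

lemma binomial_product_sums:
  fixes \<alpha> \<mu> \<nu> t x :: real
  assumes \<alpha>: "1 < \<alpha>" and \<mu>: "\<mu> \<notin> \<int>" and \<mu>\<nu>: "\<mu> + \<nu> = \<alpha> - 2"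
    and x: "\<bar>x\<bar> < 1" "\<bar>t * x\<bar> < 1"
  shows "(\<lambda>k. (\<Sum>j = 0..k. two_sided_coeff \<alpha> \<mu> \<nu> k j * t ^ j) * x ^ k) sums
    (Gamma (\<alpha> - 1) * ((1 - x) powr \<mu> * (1 - t * x) powr (1 - \<alpha>)))"
proof -
  define A where "A i = (\<mu> gchoose i) * (- x) ^ i" for i
  define B where "B i = ((1 - \<alpha>) gchoose i) * (- (t * x)) ^ i" for i
  have "summable (\<lambda>i. norm ((a gchoose i) * z ^ i))" if "\<bar>z\<bar> < 1" for a z :: real
    by (rule abs_summable_in_conv_radius) (use that in \<open>simp add: conv_radius_gchoose\<close>)
  then have "summable (\<lambda>i. norm (A i))" "summable (\<lambda>i. norm (B i))"
    unfolding A_def B_def using x by simp_all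
  moreover have "A sums (1 - x) powr \<mu>" "B sums (1 - t * x) powr (1 - \<alpha>)"
    unfolding A_def B_def using gen_binomial_real[of "- x"] gen_binomial_real[of "- (t * x)"] x by simp_all
  ultimately have "(\<lambda>k. \<Sum>i\<le>k. A i * B (k - i)) sums ((1 - x) powr \<mu> * (1 - t * x) powr (1 - \<alpha>))"
    using Cauchy_product_sums by (force simp: sums_iff)
  then have "(\<lambda>k. Gamma (\<alpha> - 1) * (\<Sum>i\<le>k. A i * B (k - i))) sums
      (Gamma (\<alpha> - 1) * ((1 - x) powr \<mu> * (1 - t * x) powr (1 - \<alpha>)))"
    by (rule sums_mult)
  moreover have "Gamma (\<alpha> - 1) * (\<Sum>i\<le>k. A i * B (k - i)) =
      (\<Sum>j = 0..k. two_sided_coeff \<alpha> \<mu> \<nu> k j * t ^ j) * x ^ k" for k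
  proof -
    have "Gamma (\<alpha> - 1) * (\<Sum>i\<le>k. A i * B (k - i)) = (\<Sum>j\<le>k. Gamma (\<alpha> - 1) * A (k - j) * B j)"
      by (subst sum.atLeastAtMost_rev[of _ 0 k, simplified atLeast0AtMost])
        (simp add: sum_distrib_left mult_ac)
    also have "\<dots> = (\<Sum>j\<le>k. two_sided_coeff \<alpha> \<mu> \<nu> k j * t ^ j * x ^ k)"
    proof (rule sum.cong[OF refl])
      fix j assume "j \<in> {..k}"
      then have "x ^ k = x ^ (k - j) * x ^ j"
        by (simp flip: power_add)
      then show "Gamma (\<alpha> - 1) * A (k - j) * B j = two_sided_coeff \<alpha> \<mu> \<nu> k j * t ^ j * x ^ k"
        using Gamma_mult_gbinomial_coeffs_eq_two_sided_coeff[OF \<alpha> \<mu> \<mu>\<nu>, of j k] \<open>j \<in> {..k}\<close>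
        by (simp add: A_def B_def power_minus[of x] power_minus[of "t * x"] power_mult_distrib mult_ac)
    qed
    finally show ?thesis
      by (simp add: sum_distrib_right atLeast0AtMost)
  qed
  ultimately show ?thesis
    by simp
qed

section \<open>The generating function of the two-sided integrals\<close>

lemma integrable_two_sided_kernels:
  fixes t \<mu> \<nu> :: real
  assumes t: "0 < t" "t < 1" and \<mu>: "-1 < \<mu>" "\<mu> < 0" and \<nu>: "-1 < \<nu>" "\<nu> < 0"
  shows "(\<lambda>y. (t - y) powr (- 1 - \<mu> - \<nu>) * (y powr \<nu> * (1 - y) powr \<mu>)) integrable_on {0<..<t}"
    and "(\<lambda>y. (y - t) powr (- 1 - \<mu> - \<nu>) * (y powr \<nu> * (1 - y) powr \<mu>)) integrable_on {t<..<1}"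
  using has_integral_two_sided_kernels[of t 0 \<mu> \<nu>] assms by auto

lemma two_sided_int_eq_integrals:
  fixes p \<alpha> \<mu> \<nu> t :: real and k :: nat
  assumes t: "0 < t" "t < 1" and \<mu>: "-1 < \<mu>" "\<mu> < 0" and \<nu>: "-1 < \<nu>" "\<nu> < 0"
    and \<mu>\<nu>: "\<mu> + \<nu> = \<alpha> - 2"
  shows "two_sided_int p 0 1 \<alpha> \<mu> \<nu> (2 - \<alpha>) (\<lambda>s. s powr \<nu> * (1 - s) powr \<mu> * s ^ k) t =
    C_const \<alpha> \<mu> \<nu> *
      (p * integral {0<..<t} (\<lambda>y. (t - y) powr (- 1 - \<mu> - \<nu>) * (y powr \<nu> * (1 - y) powr \<mu>) * y ^ k) +
       (1 - p) * integral {t<..<1} (\<lambda>y. (y - t) powr (- 1 - \<mu> - \<nu>) * (y powr \<nu> * (1 - y) powr \<mu>) * y ^ k))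
    / Gamma (2 - \<alpha>)"
proof -
  define I where "I = integral {0<..<t} (\<lambda>y. (t - y) powr (- 1 - \<mu> - \<nu>) * (y powr \<nu> * (1 - y) powr \<mu>) * y ^ k)"
  define J where "J = integral {t<..<1} (\<lambda>y. (y - t) powr (- 1 - \<mu> - \<nu>) * (y powr \<nu> * (1 - y) powr \<mu>) * y ^ k)"
  have exponent: "2 - \<alpha> - 1 = - 1 - \<mu> - \<nu>"
    using \<mu>\<nu> by simp
  have "(\<lambda>y. (t - y) powr (- 1 - \<mu> - \<nu>) * (y powr \<nu> * (1 - y) powr \<mu>) * y ^ k) integrable_on {0<..<t}"
    by (rule integrable_on_mult_power[OF _ _ integrable_two_sided_kernels(1)[OF t \<mu> \<nu>]]) (use t in auto)
  then have left: "(LINT y:{0<..<t}|lborel. (t - y) powr (- 1 - \<mu> - \<nu>) * (y powr \<nu> * (1 - y) powr \<mu> * y ^ k)) = I"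
    unfolding I_def using t by (subst set_lborel_integral_eq_integral_nonneg) (auto simp: mult_ac)
  have "(\<lambda>y. (y - t) powr (- 1 - \<mu> - \<nu>) * (y powr \<nu> * (1 - y) powr \<mu>) * y ^ k) integrable_on {t<..<1}"
    by (rule integrable_on_mult_power[OF _ _ integrable_two_sided_kernels(2)[OF t \<mu> \<nu>]]) (use t in auto)
  then have right: "(LINT y:{t<..<1}|lborel. (y - t) powr (- 1 - \<mu> - \<nu>) * (y powr \<nu> * (1 - y) powr \<mu> * y ^ k)) = J"
    unfolding J_def using t by (subst set_lborel_integral_eq_integral_nonneg) (auto simp: mult_ac)
  show ?thesis
    unfolding two_sided_int_def RL_left_def RL_right_def exponent left right I_def[symmetric] J_def[symmetric]
    by (simp add: algebra_simps add_divide_distrib diff_divide_distrib)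
qed

lemma C_const_balanced:
  assumes "p * sin (pi * \<mu>) = (1 - p) * sin (pi * \<nu>)"
  shows "C_const \<alpha> \<mu> \<nu> * p = sin (pi * \<nu>) / sin (pi * \<alpha>)"
    and "C_const \<alpha> \<mu> \<nu> * (1 - p) = sin (pi * \<mu>) / sin (pi * \<alpha>)"
  using assms by (simp_all add: C_const_def field_simps)

lemma two_sided_int_generating_function:
  fixes p \<alpha> \<mu> \<nu> t x :: real
  assumes \<alpha>: "1 < \<alpha>" "\<alpha> < 2" and \<mu>: "-1 < \<mu>" "\<mu> < 0" and \<nu>: "-1 < \<nu>" "\<nu> < 0"
    and \<mu>\<nu>: "\<mu> + \<nu> = \<alpha> - 2" and balance: "p * sin (pi * \<mu>) = (1 - p) * sin (pi * \<nu>)"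
    and t: "0 < t" "t < 1" and x: "0 \<le> x" "x < 1"
  shows "(\<lambda>k. two_sided_int p 0 1 \<alpha> \<mu> \<nu> (2 - \<alpha>) (\<lambda>s. s powr \<nu> * (1 - s) powr \<mu> * s ^ k) t * x ^ k)
    sums (Gamma (\<alpha> - 1) * ((1 - x) powr \<mu> * (1 - t * x) powr (1 - \<alpha>)))"
proof -
  define wL where "wL y = (t - y) powr (- 1 - \<mu> - \<nu>) * (y powr \<nu> * (1 - y) powr \<mu>)" for y
  define wR where "wR y = (y - t) powr (- 1 - \<mu> - \<nu>) * (y powr \<nu> * (1 - y) powr \<mu>)" for y
  define IL where "IL = integral {0<..<t} (\<lambda>y. wL y / (1 - x * y))"
  define IR where "IR = integral {t<..<1} (\<lambda>y. wR y / (1 - x * y))"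
  define C where "C = C_const \<alpha> \<mu> \<nu>"
  have exponent: "- 1 - \<mu> - \<nu> = 1 - \<alpha>"
    using \<mu>\<nu> by simp
  have "(\<lambda>k. x ^ k * integral {0<..<t} (\<lambda>y. wL y * y ^ k)) sums IL"
    unfolding IL_def using integrable_two_sided_kernels(1)[OF t \<mu> \<nu>] t x
    by (intro sums_integral_mult_power) (auto simp: wL_def)
  moreover have "(\<lambda>k. x ^ k * integral {t<..<1} (\<lambda>y. wR y * y ^ k)) sums IR"
    unfolding IR_def using integrable_two_sided_kernels(2)[OF t \<mu> \<nu>] t x
    by (intro sums_integral_mult_power) (auto simp: wR_def)
  ultimately have "(\<lambda>k. C * (p * (x ^ k * integral {0<..<t} (\<lambda>y. wL y * y ^ k)) +
        (1 - p) * (x ^ k * integral {t<..<1} (\<lambda>y. wR y * y ^ k))) / Gamma (2 - \<alpha>)) sums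
      (C * (p * IL + (1 - p) * IR) / Gamma (2 - \<alpha>))"
    by (intro sums_divide sums_mult sums_add)
  also have "C * (p * IL + (1 - p) * IR) = (C * p) * IL + (C * (1 - p)) * IR"
    by (simp add: algebra_simps)
  also have "\<dots> = (sin (pi * \<nu>) * IL + sin (pi * \<mu>) * IR) / sin (pi * \<alpha>)"
    unfolding C_def C_const_balanced[OF balance] by (simp add: add_divide_distrib)
  also have "sin (pi * \<nu>) * IL + sin (pi * \<mu>) * IR = - pi * (1 - x) powr \<mu> * (1 - x * t) powr (1 - \<alpha>)"
    unfolding IL_def IR_def wL_def wR_def exponent[symmetric] by (rule two_sided_kernel_identity[OF t x(2) \<mu> \<nu>])
  also have "- pi * (1 - x) powr \<mu> * (1 - x * t) powr (1 - \<alpha>) / sin (pi * \<alpha>) / Gamma (2 - \<alpha>) =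
      Gamma (\<alpha> - 1) * ((1 - x) powr \<mu> * (1 - x * t) powr (1 - \<alpha>))"
    by (simp add: Gamma_minus_one_reflection[OF \<alpha>])
  finally show ?thesis
    using two_sided_int_eq_integrals[OF t \<mu> \<nu> \<mu>\<nu>, of p]
    by (simp add: wL_def wR_def C_def algebra_simps)
qed

theorem lemma2p1:
  fixes p \<alpha> \<mu> \<nu> t :: real and k :: nat
  assumes "0 < p" "p < 1" "1 < \<alpha>" "\<alpha> < 2"
    and "\<alpha> - 2 < \<mu>" "\<mu> < 0" "\<alpha> - 2 < \<nu>" "\<nu> < 0"
    and "\<mu> + \<nu> = \<alpha> - 2"
    and "p * sin (pi * \<mu>) = (1 - p) * sin (pi * \<nu>)"
    and "0 < t" "t < 1"
  shows "two_sided_int p 0 1 \<alpha> \<mu> \<nu> (2 - \<alpha>) (\<lambda>s. s powr \<nu> * (1 - s) powr \<mu> * s ^ k) t =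
    (\<Sum>j = 0..k. ((-1) ^ k * ((-1) ^ j * Gamma (real j + \<alpha> - 1) * Gamma (\<mu> + 1)
        / (Gamma (\<alpha> - 1 - \<nu> - real k + real j) * Gamma (real j + 1) * Gamma (real k + 1 - real j))))
      * t ^ j)"
proof -
  have \<mu>: "-1 < \<mu>" "\<mu> < 0" and \<nu>: "-1 < \<nu>" "\<nu> < 0"
    using assms by auto
  then have "\<mu> \<notin> \<int>"
    by (auto elim!: Ints_cases)
  define lhs where "lhs k = two_sided_int p 0 1 \<alpha> \<mu> \<nu> (2 - \<alpha>) (\<lambda>s. s powr \<nu> * (1 - s) powr \<mu> * s ^ k) t"
    for k
  define rhs where "rhs k = (\<Sum>j = 0..k. two_sided_coeff \<alpha> \<mu> \<nu> k j * t ^ j)" for k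
  have "lhs = rhs"
  proof (rule powser_eq_imp_coeffs_eq)
    fix x :: real
    assume x: "0 < x" "x < 1"
    show "(\<lambda>k. lhs k * x ^ k) sums (Gamma (\<alpha> - 1) * ((1 - x) powr \<mu> * (1 - t * x) powr (1 - \<alpha>)))"
      unfolding lhs_def using assms \<mu> \<nu> x by (intro two_sided_int_generating_function) auto
    have "\<bar>t * x\<bar> < 1"
      using assms x by (simp add: abs_mult mult_less_one_if_less_one)
    then show "(\<lambda>k. rhs k * x ^ k) sums (Gamma (\<alpha> - 1) * ((1 - x) powr \<mu> * (1 - t * x) powr (1 - \<alpha>)))"
      unfolding rhs_def using assms \<open>\<mu> \<notin> \<int>\<close> x by (intro binomial_product_sums) auto
  qed simp
  then show ?thesis
    by (simp add: lhs_def rhs_def two_sided_coeff_def fun_eq_iff)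
qed

end
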